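(* Let $R$ be a simple path in $T$ with consecutive vertices $r_1,\dots,r_m$, let $k$ be an integer with $2\le k\le m$, put $N=m-k+1$, and for $j=1,\dots,N$ let $P_j$ be the path $r_j,r_{j+1},\dots,r_{j+k-1}$. Assume all $P_j$ have the same length, i.e. $|P_j|=l$ for all $j$. Then the sequence $j\mapsto\overline{S}(P_j)$ is unimodal of "increasing then decreasing" type: there exists $j^*\in\{1,\dots,N\}$ such that $\overline{S}(P_1)\le\overline{S}(P_2)\le\dots\le\overline{S}(P_{j^*})$ and $\overline{S}(P_{j^*})\ge\overline{S}(P_{j^*+1})\ge\dots\ge\overline{S}(P_N)$.
   Context: Let $T=(V,E)$ be a finite tree with vertex set $V=\{v_1,\dots,v_n\}$ and positive edge lengths; $d(x,y)$ denotes the length of the unique path in $T$ between vertices $x,y$. Each vertex $v_i$ has a weight $w_i\ge 0$ with $w(T)=\sum_i w_i=1$. A path $P$ is the vertex sequence $p(1),\dots,p(k)$ of a simple path in $T$; $|P|=d(p(1),p(k))$. For $v\in V$, $p_P(v)$ denotes the unique vertex of $P$ closest to $v$. For a vertex $p$ of $P$, the branch $T_p$ (with respect to $P$) is the set of vertices $v$ with $p_P(v)=p$, and $w_{T_p}=\sum_{v_i\in T_p}w_i$. For a vertex $p$ of $P$ put $\overline{d}_P(p)=\sum_{j=1}^k w_{T_{p(j)}}\,d(p(j),p)$. Fix a speed $v_t>0$ and a constant $\overline{G}\ge0$. Define $\overline{T}_2(P)=\frac{1}{v_t}\sum_i w_i\,\overline{d}_P(p_P(v_i))$ and $\overline{S}(P)=\overline{T}_2(P)+\overline{G}$.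 *)

theory Defs
  imports Complex_Main
begin

definition is_path :: "'a set \<Rightarrow> ('a \<times> 'a) set \<Rightarrow> 'a list \<Rightarrow> bool" where
  "is_path V E ps \<longleftrightarrow> ps \<noteq> [] \<and> distinct ps \<and> set ps \<subseteq> V \<and>
     (\<forall>i. Suc i < length ps \<longrightarrow> (ps ! i, ps ! Suc i) \<in> E)"

definition weighted_tree :: "'a set \<Rightarrow> ('a \<times> 'a) set \<Rightarrow> ('a \<Rightarrow> 'a \<Rightarrow> real) \<Rightarrow> bool" where
  "weighted_tree V E len \<longleftrightarrow> finite V \<and> V \<noteq> {} \<and> E \<subseteq> V \<times> V \<and> sym E \<and> irrefl E \<and>
     (\<forall>x y. (x, y) \<in> E \<longrightarrow> len x y > 0 \<and> len x y = len y x) \<and>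
     (\<forall>x\<in>V. \<forall>y\<in>V. \<exists>!ps. is_path V E ps \<and> hd ps = x \<and> last ps = y)"

definition path_len :: "('a \<Rightarrow> 'a \<Rightarrow> real) \<Rightarrow> 'a list \<Rightarrow> real" where
  "path_len len ps = (\<Sum>i<length ps - 1. len (ps ! i) (ps ! Suc i))"

definition tdist :: "'a set \<Rightarrow> ('a \<times> 'a) set \<Rightarrow> ('a \<Rightarrow> 'a \<Rightarrow> real) \<Rightarrow> 'a \<Rightarrow> 'a \<Rightarrow> real" where
  "tdist V E len x y = path_len len (THE ps. is_path V E ps \<and> hd ps = x \<and> last ps = y)"

definition proj :: "'a set \<Rightarrow> ('a \<times> 'a) set \<Rightarrow> ('a \<Rightarrow> 'a \<Rightarrow> real) \<Rightarrow> 'a list \<Rightarrow> 'a \<Rightarrow> 'a" where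
  "proj V E len P v = (THE p. p \<in> set P \<and>
      (\<forall>q\<in>set P. q \<noteq> p \<longrightarrow> tdist V E len v p < tdist V E len v q))"

definition branch_weight :: "'a set \<Rightarrow> ('a \<times> 'a) set \<Rightarrow> ('a \<Rightarrow> 'a \<Rightarrow> real) \<Rightarrow> ('a \<Rightarrow> real)
     \<Rightarrow> 'a list \<Rightarrow> 'a \<Rightarrow> real" where
  "branch_weight V E len w P p = (\<Sum>v\<in>{v\<in>V. proj V E len P v = p}. w v)"

definition dbar :: "'a set \<Rightarrow> ('a \<times> 'a) set \<Rightarrow> ('a \<Rightarrow> 'a \<Rightarrow> real) \<Rightarrow> ('a \<Rightarrow> real)
     \<Rightarrow> 'a list \<Rightarrow> 'a \<Rightarrow> real" where
  "dbar V E len w P p = (\<Sum>j<length P. branch_weight V E len w P (P ! j) * tdist V E len (P ! j) p)"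

definition T2bar :: "'a set \<Rightarrow> ('a \<times> 'a) set \<Rightarrow> ('a \<Rightarrow> 'a \<Rightarrow> real) \<Rightarrow> ('a \<Rightarrow> real)
     \<Rightarrow> real \<Rightarrow> 'a list \<Rightarrow> real" where
  "T2bar V E len w vt P = (1 / vt) * (\<Sum>v\<in>V. w v * dbar V E len w P (proj V E len P v))"

definition Sbar :: "'a set \<Rightarrow> ('a \<times> 'a) set \<Rightarrow> ('a \<Rightarrow> 'a \<Rightarrow> real) \<Rightarrow> ('a \<Rightarrow> real)
     \<Rightarrow> real \<Rightarrow> real \<Rightarrow> 'a list \<Rightarrow> real" where
  "Sbar V E len w vt G P = T2bar V E len w vt P + G"

definition subpath :: "'a list \<Rightarrow> nat \<Rightarrow> nat \<Rightarrow> 'a list" where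
  "subpath R k j = take k (drop (j - 1) R)"

end

theory Submission
  imports Defs
begin

(*
  Let pos i be the arc-length position of r_i along R, and let every vertex v attach to R at
  the vertex r_(attach v) closest to it. Projecting onto a window P_j clamps the attachment
  index into the window, so the distance between the projections of u and v is the total
  length of the window edges separating their attachment points. Summing over pairs gives
  T2bar(P_j) = (2 / v_t) * sum over the edges e_i of P_j of |e_i| * B_i * (1 - B_i), where B_i
  is the weight attached beyond e_i. Equal window lengths force |e_(j+k-1)| = |e_j|, so
  sliding the window one step changes Sbar by (2 / v_t) * |e_j| * (phi (B_(j+k-1)) - phi (B_j))
  with phi t = t * (1 - t). As B is nonincreasing and phi is concave, i \<mapsto> phi (B_i) is
  quasiconcave, so these differences change sign at most once, from + to -.
*)

lemma exists_peak:
  fixes f :: "nat \<Rightarrow> 'b::linorder"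
  assumes "1 \<le> N"
    and stays_down: "\<And>j j'. 1 \<le> j \<Longrightarrow> j \<le> j' \<Longrightarrow> j' < N \<Longrightarrow> f (j + 1) < f j \<Longrightarrow>
        f (j' + 1) \<le> f j'"
  shows "\<exists>js\<in>{1..N}. (\<forall>j. 1 \<le> j \<and> j < js \<longrightarrow> f j \<le> f (j + 1)) \<and>
           (\<forall>j. js \<le> j \<and> j < N \<longrightarrow> f (j + 1) \<le> f j)"
proof (cases "\<exists>j. 1 \<le> j \<and> j < N \<and> f (j + 1) < f j")
  case True
  define js where "js = (LEAST j. 1 \<le> j \<and> j < N \<and> f (j + 1) < f j)"
  have js: "1 \<le> js" "js < N" "f (js + 1) < f js"
    using LeastI_ex[OF True] unfolding js_def by auto
  have "f j \<le> f (j + 1)" if "1 \<le> j" "j < js" for j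
    using not_less_Least[of j "\<lambda>j. 1 \<le> j \<and> j < N \<and> f (j + 1) < f j"] that js
    unfolding js_def by fastforce
  moreover have "f (j + 1) \<le> f j" if "js \<le> j" "j < N" for j
    using stays_down[OF js(1) that js(3)] .
  ultimately show ?thesis using js by (intro bexI[of _ js]) auto
next
  case False
  then show ?thesis using assms(1) by (intro bexI[of _ N]) auto
qed

lemma shifted_difference_stays_nonpos:
  fixes g :: "nat \<Rightarrow> 'b::linorder"
  assumes quasiconcave: "\<And>a b c. a \<le> b \<Longrightarrow> b \<le> c \<Longrightarrow> min (g a) (g c) \<le> g b"
    and down: "g (s + d) < g s" and "s \<le> s'"
  shows "g (s' + d) \<le> g s'"
proof -
  have "min (g s) (g (s' + d)) \<le> g (s + d)" using quasiconcave \<open>s \<le> s'\<close> by simp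
  with down have "g (s' + d) < g s" by (auto simp: min_def split: if_splits)
  moreover have "min (g s) (g (s' + d)) \<le> g s'" using quasiconcave \<open>s \<le> s'\<close> by simp
  ultimately show ?thesis by (simp add: min_def split: if_splits)
qed

lemma exists_peak_of_shifted_differences:
  fixes f g r :: "nat \<Rightarrow> real"
  assumes "1 \<le> N"
    and quasiconcave: "\<And>a b c. a \<le> b \<Longrightarrow> b \<le> c \<Longrightarrow> min (g a) (g c) \<le> g b"
    and step: "\<And>j. 1 \<le> j \<Longrightarrow> j < N \<Longrightarrow> f (j + 1) - f j = r j * (g (j + d) - g j)"
    and r_pos: "\<And>j. 0 < r j"
  shows "\<exists>js\<in>{1..N}. (\<forall>j. 1 \<le> j \<and> j < js \<longrightarrow> f j \<le> f (j + 1)) \<and>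
           (\<forall>j. js \<le> j \<and> j < N \<longrightarrow> f (j + 1) \<le> f j)"
proof (rule exists_peak[OF assms(1)])
  fix j j' assume j: "1 \<le> j" "j \<le> j'" "j' < N" and down: "f (j + 1) < f j"
  have "r j * (g (j + d) - g j) < r j * 0" using step[of j] down j by simp
  then have "g (j + d) < g j" unfolding mult_less_cancel_left_pos[OF r_pos] by simp
  then have "g (j' + d) \<le> g j'" using shifted_difference_stays_nonpos[of g, OF quasiconcave] j(2) by blast
  then have "r j' * (g (j' + d) - g j') \<le> 0" using r_pos[of j'] by (simp add: mult_nonneg_nonpos)
  then show "f (j' + 1) \<le> f j'" using step[of j'] j by simp
qed

lemma min_mult_one_minus_le:
  fixes p q t :: real
  assumes "q \<le> t" "t \<le> p"
  shows "min (p * (1 - p)) (q * (1 - q)) \<le> t * (1 - t)"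
proof (cases "t + q \<le> 1")
  case True
  have "0 \<le> (t - q) * (1 - t - q)" using True assms by (intro mult_nonneg_nonneg) auto
  then show ?thesis by (simp add: algebra_simps min_le_iff_disj)
next
  case False
  have "0 \<le> (t - p) * (1 - t - p)" using False assms by (intro mult_nonpos_nonpos) auto
  then show ?thesis by (simp add: algebra_simps min_le_iff_disj)
qed

lemma strict_mono_clamp_closer:
  fixes f :: "nat \<Rightarrow> real"
  assumes "strict_mono f" "s \<le> i" "i \<le> t" "i \<noteq> max s (min t p)"
  shows "\<bar>f (max s (min t p)) - f p\<bar> < \<bar>f i - f p\<bar>"
proof -
  have less: "a < b \<Longrightarrow> f a < f b" for a b using assms(1) strict_monoD by blast
  consider "p < s" | "t < p" | "s \<le> p" "p \<le> t" by linarith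
  then show ?thesis
  proof cases
    case 1
    then show ?thesis using assms(2-4) less[of p s] less[of s i] by auto
  next
    case 2
    then show ?thesis using assms(2-4) less[of t p] less[of i t] by auto
  next
    case 3
    then have "max s (min t p) = p" by simp
    with assms(4) have "f i \<noteq> f p" using less[of i p] less[of p i] by (cases "i < p") auto
    then show ?thesis using \<open>max s (min t p) = p\<close> by simp
  qed
qed

lemma sum_nth_distinct_group:
  fixes w :: "'b \<Rightarrow> real" and f :: "'c \<Rightarrow> real"
  assumes "finite A" "distinct P" "\<forall>u\<in>A. g u \<in> set P"
  shows "(\<Sum>t<length P. (\<Sum>u\<in>{u\<in>A. g u = P ! t}. w u) * f (P ! t)) = (\<Sum>u\<in>A. w u * f (g u))"
proof -
  let ?F = "\<lambda>p. (\<Sum>u\<in>{u\<in>A. g u = p}. w u) * f p"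
  have "(!) P ` {..<length P} = set P" by (auto simp: in_set_conv_nth)
  then have "(\<Sum>t<length P. ?F (P ! t)) = sum ?F (set P)"
    using sum.reindex[OF inj_on_nth[OF assms(2)], of "{..<length P}" ?F] by simp
  also have "\<dots> = (\<Sum>p\<in>set P. \<Sum>u\<in>{u\<in>A. g u = p}. w u * f (g u))"
    by (rule sum.cong) (auto simp: sum_distrib_right)
  also have "\<dots> = (\<Sum>u\<in>A. w u * f (g u))"
    using sum.group[of A "set P" g "\<lambda>u. w u * f (g u)"] assms by auto
  finally show ?thesis .
qed

lemma double_sum_disagreement:
  fixes w J :: "'b \<Rightarrow> real"
  assumes "sum w A = 1"
  shows "(\<Sum>v\<in>A. \<Sum>u\<in>A. w v * w u * (J v + J u - 2 * J v * J u)) =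
    2 * ((\<Sum>v\<in>A. w v * J v) * (1 - (\<Sum>v\<in>A. w v * J v)))"
proof -
  let ?B = "\<Sum>v\<in>A. w v * J v"
  have "(\<Sum>u\<in>A. w v * w u * (J v + J u - 2 * J v * J u)) =
      w v * J v * sum w A + w v * ?B - 2 * (w v * J v) * ?B" for v
    by (simp add: algebra_simps sum.distrib sum_subtractf sum_distrib_left)
  then have "(\<Sum>v\<in>A. \<Sum>u\<in>A. w v * w u * (J v + J u - 2 * J v * J u)) =
      ?B + sum w A * ?B - 2 * ?B * ?B"
    using assms by (simp add: sum.distrib sum_subtractf sum_distrib_right[symmetric]
        sum_distrib_left[symmetric])
  then show ?thesis using assms by (simp add: algebra_simps)
qed

lemma is_path_iff_successively:
  "is_path V E ps \<longleftrightarrow> ps \<noteq> [] \<and> distinct ps \<and> set ps \<subseteq> V \<and> successively (\<lambda>a b. (a, b) \<in> E) ps"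
  by (simp add: is_path_def successively_conv_nth)

lemma is_path_take_drop:
  "is_path V E ps \<Longrightarrow> a + n < length ps \<Longrightarrow> is_path V E (take (Suc n) (drop a ps))"
  unfolding is_path_iff_successively
  by (auto simp: successively_conv_nth dest: in_set_takeD in_set_dropD)

lemma is_path_rev: "sym E \<Longrightarrow> is_path V E ps \<Longrightarrow> is_path V E (rev ps)"
  unfolding is_path_iff_successively by (auto elim: successively_mono dest: symD)

lemma is_path_append_tl:
  assumes "is_path V E ps" "is_path V E qs" "last ps = hd qs" "set ps \<inter> set (tl qs) = {}"
  shows "is_path V E (ps @ tl qs)"
proof -
  obtain q qs' where qs: "qs = q # qs'" using assms(2) by (cases qs) (auto simp: is_path_def)
  then show ?thesis
    using assms unfolding is_path_iff_successively successively_append_iff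
    by (auto simp: successively_Cons)
qed

lemma last_append_tl: "qs \<noteq> [] \<Longrightarrow> last ps = hd qs \<Longrightarrow> last (ps @ tl qs) = last qs"
  by (cases qs) auto

fun path_len_rec :: "('a \<Rightarrow> 'a \<Rightarrow> real) \<Rightarrow> 'a list \<Rightarrow> real" where
  "path_len_rec len (a # b # ps) = len a b + path_len_rec len (b # ps)"
| "path_len_rec len _ = 0"

lemma path_len_eq_rec: "path_len len ps = path_len_rec len ps"
proof (induction len ps rule: path_len_rec.induct)
  case (1 len a b ps)
  have "path_len len (a # b # ps) = len a b + path_len len (b # ps)"
    unfolding path_len_def by (simp add: sum.lessThan_Suc_shift del: sum.lessThan_Suc)
  then show ?case using 1 by simp
qed (auto simp: path_len_def)

lemma path_len_rec_append:
  "ps \<noteq> [] \<Longrightarrow> qs \<noteq> [] \<Longrightarrow> last ps = hd qs \<Longrightarrow>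
    path_len_rec len (ps @ tl qs) = path_len_rec len ps + path_len_rec len qs"
proof (induction ps rule: induct_list012)
  case (2 a)
  then show ?case by (cases qs) auto
qed simp_all

lemma path_len_rec_rev:
  assumes "\<And>a b. (a, b) \<in> E \<Longrightarrow> len a b = len b a" "successively (\<lambda>a b. (a, b) \<in> E) ps"
  shows "path_len_rec len (rev ps) = path_len_rec len ps"
  using assms(2)
proof (induction ps rule: induct_list012)
  case (3 a b ps)
  then have ab: "(a, b) \<in> E" and IH: "path_len_rec len (rev (b # ps)) = path_len_rec len (b # ps)"
    by simp_all
  have "path_len_rec len (rev (a # b # ps)) = path_len_rec len (rev (b # ps) @ tl [b, a])" by simp
  also have "\<dots> = path_len_rec len (rev (b # ps)) + len b a"
    by (subst path_len_rec_append) (auto simp: last_rev)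
  also have "len b a = len a b" using assms(1)[OF ab] by (rule sym)
  finally show ?case using IH by simp
qed auto

lemma path_len_take_drop:
  "a + n < length ps \<Longrightarrow>
    path_len len (take (Suc n) (drop a ps)) = (\<Sum>i<n. len (ps ! (a + i)) (ps ! Suc (a + i)))"
  by (simp add: path_len_def)

lemma last_take_drop: "s + k \<le> length xs \<Longrightarrow> 1 \<le> k \<Longrightarrow> last (take k (drop s xs)) = xs ! (s + k - 1)"
  by (simp add: last_conv_nth)

locale tree_with_path =
  fixes V :: "'a set" and E :: "('a \<times> 'a) set" and len :: "'a \<Rightarrow> 'a \<Rightarrow> real" and R :: "'a list"
  assumes tree: "weighted_tree V E len" and R_path: "is_path V E R"
begin

lemma finite_V: "finite V"
  using tree by (simp add: weighted_tree_def)

lemma sym_E: "sym E"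
  using tree by (simp add: weighted_tree_def)

lemma len_sym: "(a, b) \<in> E \<Longrightarrow> len a b = len b a"
  using tree unfolding weighted_tree_def by blast

lemma len_pos: "(a, b) \<in> E \<Longrightarrow> 0 < len a b"
  using tree by (simp add: weighted_tree_def)

lemma R_nth_in_V: "i < length R \<Longrightarrow> R ! i \<in> V"
  using R_path by (auto simp: is_path_def)

lemma unique_path: "a \<in> V \<Longrightarrow> b \<in> V \<Longrightarrow> \<exists>!ps. is_path V E ps \<and> hd ps = a \<and> last ps = b"
  using tree by (simp add: weighted_tree_def)

definition tpath :: "'a \<Rightarrow> 'a \<Rightarrow> 'a list" where
  "tpath a b = (THE ps. is_path V E ps \<and> hd ps = a \<and> last ps = b)"

lemma tpath: "a \<in> V \<Longrightarrow> b \<in> V \<Longrightarrow> is_path V E (tpath a b) \<and> hd (tpath a b) = a \<and> last (tpath a b) = b"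
  unfolding tpath_def by (rule theI'[OF unique_path])

lemma tpath_unique: "is_path V E ps \<Longrightarrow> tpath (hd ps) (last ps) = ps"
  unfolding tpath_def
  by (rule the1_equality[OF unique_path]) (auto simp: is_path_def)

lemma tdist_path: "is_path V E ps \<Longrightarrow> tdist V E len (hd ps) (last ps) = path_len_rec len ps"
  unfolding tdist_def tpath_def[symmetric] by (simp add: tpath_unique path_len_eq_rec)

text \<open>\<open>pos i\<close> is the arc-length position of \<open>R ! i\<close> along \<open>R\<close>; the junk value of \<open>edge\<close> past
  the end of \<open>R\<close> only serves to make it positive everywhere.\<close>
definition edge :: "nat \<Rightarrow> real" where
  "edge i = (if Suc i < length R then len (R ! i) (R ! Suc i) else 1)"

definition pos :: "nat \<Rightarrow> real" where
  "pos n = (\<Sum>i<n. edge i)"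

lemma edge_pos: "0 < edge i"
  using len_pos R_path by (simp add: edge_def is_path_def)

lemma strict_mono_pos: "strict_mono pos"
  unfolding strict_mono_Suc_iff pos_def using edge_pos by simp

lemma pos_add: "pos (a + n) = pos a + (\<Sum>i<n. edge (a + i))"
  by (induction n) (auto simp: pos_def)

lemma R_segment_forward:
  assumes "a \<le> b" "b < length R"
  shows "\<exists>s. is_path V E s \<and> hd s = R ! a \<and> last s = R ! b \<and>
    path_len_rec len s = pos b - pos a \<and> set s \<subseteq> set R"
proof -
  define n where "n = b - a"
  have b: "b = a + n" using assms n_def by simp
  let ?s = "take (Suc n) (drop a R)"
  have "is_path V E ?s" using is_path_take_drop[OF R_path] assms b by simp
  moreover have "hd ?s = R ! a" using assms by (simp add: hd_drop_conv_nth)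
  moreover have "last ?s = R ! b" using assms b by (simp add: last_conv_nth)
  moreover have "path_len_rec len ?s = pos b - pos a"
    using path_len_take_drop[of a n R len] assms b pos_add[of a n]
    by (simp add: edge_def path_len_eq_rec)
  moreover have "set ?s \<subseteq> set R" by (meson in_set_dropD in_set_takeD subsetI)
  ultimately show ?thesis by blast
qed

lemma R_segment:
  assumes "a < length R" "b < length R"
  shows "\<exists>s. is_path V E s \<and> hd s = R ! a \<and> last s = R ! b \<and>
    path_len_rec len s = \<bar>pos b - pos a\<bar> \<and> set s \<subseteq> set R"
proof (cases "a \<le> b")
  case True
  then show ?thesis
    using R_segment_forward[OF True assms(2)] strict_mono_pos by (simp add: strict_mono_less_eq)
next
  case False
  then obtain s where s: "is_path V E s" "hd s = R ! b" "last s = R ! a"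
    "path_len_rec len s = pos a - pos b" "set s \<subseteq> set R"
    using R_segment_forward[of b a] assms by auto
  have "pos b \<le> pos a" using False strict_mono_pos by (simp add: strict_mono_less_eq)
  moreover have "path_len_rec len (rev s) = path_len_rec len s"
    using path_len_rec_rev[of E len s, OF len_sym] s(1) by (simp add: is_path_iff_successively)
  moreover have "s \<noteq> []" using s(1) by (simp add: is_path_def)
  ultimately show ?thesis
    using s is_path_rev[OF sym_E s(1)] by (intro exI[of _ "rev s"]) (auto simp: hd_rev last_rev)
qed

lemma tdist_R: "a < length R \<Longrightarrow> b < length R \<Longrightarrow> tdist V E len (R ! a) (R ! b) = \<bar>pos b - pos a\<bar>"
  using R_segment tdist_path by metis

lemma shortest_path_to_R:
  assumes v: "v \<in> V"
  obtains p q where "p < length R" "is_path V E q" "hd q = v" "last q = R ! p"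
    "set (butlast q) \<inter> set R = {}"
proof -
  have "R \<noteq> []" using R_path by (simp add: is_path_def)
  then obtain p where p: "p < length R"
    and shortest: "\<And>i. i < length R \<Longrightarrow> length (tpath v (R ! p)) \<le> length (tpath v (R ! i))"
    using ex_has_least_nat[of "\<lambda>i. i < length R" 0 "\<lambda>i. length (tpath v (R ! i))"] by auto
  define q where "q = tpath v (R ! p)"
  have q: "is_path V E q" "hd q = v" "last q = R ! p"
    using tpath[OF v R_nth_in_V[OF p]] by (simp_all add: q_def)
  have "q ! t \<notin> set R" if t: "Suc t < length q" for t
  proof
    assume "q ! t \<in> set R"
    then obtain i where i: "i < length R" "R ! i = q ! t" by (auto simp: in_set_conv_nth)
    let ?q' = "take (Suc t) q"
    have "is_path V E ?q'" using is_path_take_drop[OF q(1), of 0 t] t by simp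
    moreover have "hd ?q' = v" "last ?q' = R ! i"
      using q t i by (auto simp: hd_conv_nth last_conv_nth is_path_def)
    ultimately have "tpath v (R ! i) = ?q'" using tpath_unique by metis
    then show False using shortest[OF i(1)] t by (simp add: q_def)
  qed
  then have "set (butlast q) \<inter> set R = {}"
    by (auto simp: in_set_conv_nth nth_butlast)
  then show ?thesis using that p q by blast
qed

lemma exists_attachment:
  assumes v: "v \<in> V"
  shows "\<exists>p<length R. \<forall>i<length R.
    tdist V E len v (R ! i) = tdist V E len v (R ! p) + \<bar>pos i - pos p\<bar>"
proof -
  obtain p q where p: "p < length R" and q: "is_path V E q" "hd q = v" "last q = R ! p"
    and off_R: "set (butlast q) \<inter> set R = {}"
    using shortest_path_to_R[OF v] .
  have "tdist V E len v (R ! i) = tdist V E len v (R ! p) + \<bar>pos i - pos p\<bar>"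
    if i: "i < length R" for i
  proof -
    obtain s where s: "is_path V E s" "hd s = R ! p" "last s = R ! i"
      "path_len_rec len s = \<bar>pos i - pos p\<bar>" "set s \<subseteq> set R"
      using R_segment[OF p i] by blast
    have ne: "q \<noteq> []" "s \<noteq> []" using q(1) s(1) by (simp_all add: is_path_def)
    have "hd s \<notin> set (tl s)" using s(1) ne(2) by (cases s) (auto simp: is_path_def)
    moreover have "set q = insert (last q) (set (butlast q))"
      using ne(1) by (cases q rule: rev_cases) auto
    moreover have "set (tl s) \<subseteq> set R" using s(5) by (cases s) auto
    ultimately have "set q \<inter> set (tl s) = {}" using off_R q(3) s(2) by auto
    then have qs: "is_path V E (q @ tl s)" using is_path_append_tl q(1) s(1) q(3) s(2) by metis
    have "tdist V E len v (R ! i) = path_len_rec len (q @ tl s)"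
      using tdist_path[OF qs] ne q(2,3) s(2,3) last_append_tl[of s q] by simp
    also have "\<dots> = path_len_rec len q + path_len_rec len s"
      using path_len_rec_append ne q(3) s(2) by metis
    finally show ?thesis using tdist_path[OF q(1)] q(2,3) s(4) by simp
  qed
  then show ?thesis using p by blast
qed

definition attach :: "'a \<Rightarrow> nat" where
  "attach v = (SOME p. p < length R \<and> (\<forall>i<length R.
     tdist V E len v (R ! i) = tdist V E len v (R ! p) + \<bar>pos i - pos p\<bar>))"

lemma attach:
  assumes "v \<in> V"
  shows "attach v < length R"
    and "i < length R \<Longrightarrow> tdist V E len v (R ! i) = tdist V E len v (R ! attach v) + \<bar>pos i - pos (attach v)\<bar>"
  using someI_ex[OF exists_attachment[OF assms]] unfolding attach_def[symmetric] by blast+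

lemma in_set_window_iff:
  assumes "s + k \<le> length R"
  shows "q \<in> set (take k (drop s R)) \<longleftrightarrow> (\<exists>i. s \<le> i \<and> i < s + k \<and> q = R ! i)"
proof
  assume "q \<in> set (take k (drop s R))"
  then obtain t where "t < k" "q = R ! (s + t)" by (auto simp: in_set_conv_nth)
  then show "\<exists>i. s \<le> i \<and> i < s + k \<and> q = R ! i" by (intro exI[of _ "s + t"]) auto
next
  assume "\<exists>i. s \<le> i \<and> i < s + k \<and> q = R ! i"
  then obtain i where "s \<le> i" "i < s + k" "q = R ! i" by blast
  then have "q = take k (drop s R) ! (i - s)" "i - s < length (take k (drop s R))" using assms by auto
  then show "q \<in> set (take k (drop s R))" by (metis nth_mem)
qed

lemma proj_window:
  assumes v: "v \<in> V" and "s + k \<le> length R" "1 \<le> k"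
  shows "proj V E len (take k (drop s R)) v = R ! max s (min (s + k - 1) (attach v))"
proof -
  define c where "c = max s (min (s + k - 1) (attach v))"
  let ?P = "take k (drop s R)"
  have "s \<le> c" "c \<le> s + k - 1" unfolding c_def using assms(3) by simp_all
  then have c: "s \<le> c" "c < s + k" "c < length R" using assms(2,3) by linarith+
  have in_P: "R ! c \<in> set ?P"
    unfolding in_set_window_iff[OF assms(2)] using c(1,2) by (intro exI[of _ c]) simp
  have closest: "tdist V E len v (R ! c) < tdist V E len v q" if q: "q \<in> set ?P" "q \<noteq> R ! c" for q
  proof -
    obtain i where i: "s \<le> i" "i < s + k" "q = R ! i"
      using q(1) in_set_window_iff[OF assms(2)] by blast
    then have "i \<noteq> c" "i < length R" using q(2) assms(2) by auto
    then have "\<bar>pos c - pos (attach v)\<bar> < \<bar>pos i - pos (attach v)\<bar>"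
      using strict_mono_clamp_closer[OF strict_mono_pos, of s i "s + k - 1" "attach v"] i
      unfolding c_def by simp
    then show ?thesis using attach(2)[OF v c(3)] attach(2)[OF v \<open>i < length R\<close>]
      unfolding i(3) by linarith
  qed
  have "p = R ! c" if "p \<in> set ?P" "\<forall>q\<in>set ?P. q \<noteq> p \<longrightarrow> tdist V E len v p < tdist V E len v q" for p
    using closest[OF that(1)] that(2) in_P by force
  then have "\<exists>!p. p \<in> set ?P \<and> (\<forall>q\<in>set ?P. q \<noteq> p \<longrightarrow> tdist V E len v p < tdist V E len v q)"
    using in_P closest by (intro ex1I[of _ "R ! c"]) blast+
  then show ?thesis unfolding proj_def c_def[symmetric]
    by (rule the1_equality) (use in_P closest in blast)
qed

lemma T2bar_window:
  assumes "s + k \<le> length R" "1 \<le> k"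
  shows "T2bar V E len w vt (take k (drop s R)) = (1 / vt) * (\<Sum>v\<in>V. w v * (\<Sum>u\<in>V. w u *
     \<bar>pos (max s (min (s + k - 1) (attach v))) - pos (max s (min (s + k - 1) (attach u)))\<bar>))"
proof -
  let ?P = "take k (drop s R)"
  let ?c = "\<lambda>a. max s (min (s + k - 1) a)"
  have c: "?c a < length R" for a using assms by simp
  have "distinct ?P" using R_path by (simp add: is_path_def)
  moreover have "proj V E len ?P u \<in> set ?P" if "u \<in> V" for u
    unfolding proj_window[OF that assms] in_set_window_iff[OF assms(1)] using assms(2)
    by (intro exI[of _ "?c (attach u)"]) auto
  ultimately have "dbar V E len w ?P p = (\<Sum>u\<in>V. w u * tdist V E len (proj V E len ?P u) p)" for p
    unfolding dbar_def branch_weight_def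
    using sum_nth_distinct_group[OF finite_V, of ?P "proj V E len ?P" w "\<lambda>q. tdist V E len q p"]
    by simp
  also have "\<dots> (proj V E len ?P v) = (\<Sum>u\<in>V. w u * \<bar>pos (?c (attach v)) - pos (?c (attach u))\<bar>)"
    if "v \<in> V" for v
    using proj_window[OF that assms] proj_window[OF _ assms] tdist_R[OF c c] by (intro sum.cong) simp_all
  finally show ?thesis unfolding T2bar_def by (simp cong: sum.cong)
qed

lemma pos_clamp:
  assumes "s \<le> t"
  shows "pos (max s (min t a)) = pos s + (\<Sum>i\<in>{s..<t}. edge i * of_bool (i < a))"
proof -
  have "{i \<in> {s..<t}. i < a} = {s..<max s (min t a)}" using assms by auto
  then have "(\<Sum>i\<in>{s..<t}. edge i * of_bool (i < a)) = sum edge {s..<max s (min t a)}"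
    by (simp add: sum.inter_filter[symmetric] of_bool_def if_distrib cong: if_cong)
  moreover have "pos (max s (min t a)) = pos s + sum edge {s..<max s (min t a)}"
    unfolding pos_def lessThan_atLeast0 by (simp add: sum.atLeastLessThan_concat)
  ultimately show ?thesis by simp
qed

lemma abs_pos_clamp_diff:
  assumes "s \<le> t"
  shows "\<bar>pos (max s (min t a)) - pos (max s (min t b))\<bar> =
    (\<Sum>i\<in>{s..<t}. edge i * \<bar>of_bool (i < a) - of_bool (i < b)\<bar>)"
proof (induction a b rule: linorder_wlog)
  case (le a b)
  have "pos (max s (min t b)) - pos (max s (min t a)) =
      (\<Sum>i\<in>{s..<t}. edge i * (of_bool (i < b) - of_bool (i < a)))"
    by (simp add: pos_clamp[OF assms] sum_subtractf right_diff_distrib)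
  also have "\<dots> = (\<Sum>i\<in>{s..<t}. edge i * \<bar>of_bool (i < a) - of_bool (i < b)\<bar>)"
    using le by (intro sum.cong) auto
  moreover have "0 \<le> \<dots>" using edge_pos by (intro sum_nonneg) (simp add: less_imp_le)
  ultimately show ?case by linarith
qed (simp add: abs_minus_commute)

definition weight_beyond :: "('a \<Rightarrow> real) \<Rightarrow> nat \<Rightarrow> real" where
  "weight_beyond w i = (\<Sum>u\<in>V. w u * of_bool (i < attach u))"

definition separation :: "('a \<Rightarrow> real) \<Rightarrow> nat \<Rightarrow> real" where
  "separation w i = weight_beyond w i * (1 - weight_beyond w i)"

lemma abs_of_bool_diff: "\<bar>of_bool P - of_bool Q\<bar> = of_bool P + of_bool Q - 2 * of_bool P * (of_bool Q :: real)"
  by (simp add: of_bool_def)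

text \<open>Two vertices contribute the edge \<open>i\<close> of the window to their distance exactly when they
  attach on opposite sides of it, which happens with probability \<open>2 * separation w i\<close>.\<close>
lemma T2bar_window_edges:
  assumes "sum w V = 1" "s + k \<le> length R" "1 \<le> k"
  shows "T2bar V E len w vt (take k (drop s R)) =
    (2 / vt) * (\<Sum>i\<in>{s..<s + k - 1}. edge i * separation w i)"
proof -
  let ?W = "{s..<s + k - 1}"
  let ?J = "\<lambda>i v. of_bool (i < attach v) :: real"
  have le: "s \<le> s + k - 1" using assms(3) by simp
  have "(\<Sum>v\<in>V. w v * (\<Sum>u\<in>V. w u * (\<Sum>i\<in>?W. edge i * \<bar>?J i v - ?J i u\<bar>))) =
      (\<Sum>v\<in>V. \<Sum>u\<in>V. \<Sum>i\<in>?W. edge i * (w v * w u * \<bar>?J i v - ?J i u\<bar>))"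
    by (simp add: sum_distrib_left ac_simps)
  also have "\<dots> = (\<Sum>i\<in>?W. \<Sum>v\<in>V. \<Sum>u\<in>V. edge i * (w v * w u * \<bar>?J i v - ?J i u\<bar>))"
    by (simp only: sum.swap[of _ V ?W])
  also have "\<dots> = (\<Sum>i\<in>?W. edge i * (2 * separation w i))"
    unfolding sum_distrib_left[symmetric] abs_of_bool_diff separation_def weight_beyond_def
    by (simp add: double_sum_disagreement[OF assms(1)])
  finally show ?thesis
    unfolding T2bar_window[OF assms(2,3)] abs_pos_clamp_diff[OF le]
    by (simp add: sum_distrib_left ac_simps)
qed

lemma separation_quasiconcave:
  assumes "\<forall>v\<in>V. 0 \<le> w v" "a \<le> b" "b \<le> c"
  shows "min (separation w a) (separation w c) \<le> separation w b"
proof -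
  have "weight_beyond w j \<le> weight_beyond w i" if "i \<le> j" for i j
    unfolding weight_beyond_def using assms(1) that by (intro sum_mono) auto
  then show ?thesis
    unfolding separation_def using assms(2,3) by (intro min_mult_one_minus_le) auto
qed

lemma edge_shift_eq:
  assumes "s + k < length R" "1 \<le> k"
    and "tdist V E len (R ! s) (R ! (s + k - 1)) = tdist V E len (R ! Suc s) (R ! (s + k))"
  shows "edge (s + k - 1) = edge s"
proof -
  have "pos (s + k - 1) - pos s = pos (s + k) - pos (Suc s)"
    using assms tdist_R[of s "s + k - 1"] tdist_R[of "Suc s" "s + k"] strict_mono_pos
    by (simp add: strict_mono_less_eq)
  moreover have "pos (s + k) = pos (s + k - 1) + edge (s + k - 1)"
    using assms(2) pos_add[of "s + k - 1" 1] by simp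
  ultimately show ?thesis using pos_add[of s 1] by simp
qed

lemma Sbar_window_succ_diff:
  assumes "sum w V = 1" "s + k < length R" "1 \<le> k" "edge (s + k - 1) = edge s"
  shows "Sbar V E len w vt G (take k (drop (Suc s) R)) - Sbar V E len w vt G (take k (drop s R)) =
    (2 / vt) * edge s * (separation w (s + k - 1) - separation w s)"
proof -
  let ?f = "\<lambda>i. edge i * separation w i"
  have T2bar: "T2bar V E len w vt (take k (drop s' R)) = (2 / vt) * sum ?f {s'..<s' + k - 1}"
    if "s' \<le> Suc s" for s'
    using T2bar_window_edges[OF assms(1) _ assms(3)] that assms(2) by simp
  have "sum ?f {s..<s + k - 1} + ?f (s + k - 1) = ?f s + sum ?f {Suc s..<Suc s + k - 1}"
    using assms(3) sum.atLeastLessThan_Suc[of s "s + k - 1" ?f] sum.atLeast_Suc_lessThan[of s "s + k" ?f]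
    by simp
  then have "sum ?f {Suc s..<Suc s + k - 1} - sum ?f {s..<s + k - 1} =
      edge s * separation w (s + k - 1) - edge s * separation w s"
    using assms(4) by simp
  then show ?thesis
    unfolding Sbar_def T2bar[OF le_SucI[OF order.refl]] T2bar[OF order.refl]
    by (simp only: add_diff_cancel_right right_diff_distrib[symmetric] mult.assoc)
qed

end

theorem lemma4:
  fixes V :: "'a set" and E :: "('a \<times> 'a) set" and len :: "'a \<Rightarrow> 'a \<Rightarrow> real"
    and w :: "'a \<Rightarrow> real" and vt G l :: real and R :: "'a list" and k :: nat
  assumes tree: "weighted_tree V E len"
    and w_nonneg: "\<forall>v\<in>V. w v \<ge> 0"
    and w_sum: "(\<Sum>v\<in>V. w v) = 1"
    and vt_pos: "vt > 0"
    and G_nonneg: "G \<ge> 0"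
    and R_path: "is_path V E R"
    and k_ge: "2 \<le> k" and k_le: "k \<le> length R"
    and same_len: "\<forall>j\<in>{1..length R - k + 1}.
        tdist V E len (hd (subpath R k j)) (last (subpath R k j)) = l"
  shows "\<exists>js\<in>{1..length R - k + 1}.
           (\<forall>j. 1 \<le> j \<and> j < js \<longrightarrow>
              Sbar V E len w vt G (subpath R k j) \<le> Sbar V E len w vt G (subpath R k (j + 1))) \<and>
           (\<forall>j. js \<le> j \<and> j < length R - k + 1 \<longrightarrow>
              Sbar V E len w vt G (subpath R k j) \<ge> Sbar V E len w vt G (subpath R k (j + 1)))"
proof -
  interpret tree_with_path V E len R using tree R_path by unfold_locales
  have window_len: "tdist V E len (R ! s) (R ! (s + k - 1)) = l" if "s + k \<le> length R" for s
    using same_len[rule_format, of "Suc s"] that k_ge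
    by (simp add: subpath_def hd_drop_conv_nth last_take_drop)
  have step: "Sbar V E len w vt G (subpath R k (j + 1)) - Sbar V E len w vt G (subpath R k j) =
      (2 / vt * edge (j - 1)) * (separation w (j + (k - 1) - 1) - separation w (j - 1))"
    if "1 \<le> j" "j < length R - k + 1" for j
  proof -
    obtain s where j: "j = Suc s" using \<open>1 \<le> j\<close> by (cases j) auto
    have "s + k < length R" using that(2) k_le unfolding j by linarith
    then have "edge (s + k - 1) = edge s"
      using edge_shift_eq window_len[of s] window_len[of "Suc s"] k_ge by simp
    then show ?thesis
      using Sbar_window_succ_diff[OF w_sum \<open>s + k < length R\<close>] k_ge
      unfolding j subpath_def by (simp add: add.commute)
  qed
  show ?thesis
    by (rule exists_peak_of_shifted_differences[OF _ _ step])
      (use separation_quasiconcave[OF w_nonneg] vt_pos edge_pos in auto)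
qed

end
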